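(* Let $f(n)$ be the number of permutations $\pi\in\mathfrak S_n$ all of whose valleys are even and all of whose peaks are odd (with $f(0)=1$), and let $F(x)=\sum_{n\ge0} f(n)\,x^n/n!$. Then \[ F(x)=\frac{3\sin\left(\tfrac{1}{2}x\right)+3\cosh\left(\tfrac{1}{2}\sqrt{3}x\right)}{3\cos\left(\tfrac{1}{2}x\right)-\sqrt{3}\sinh\left(\tfrac{1}{2}\sqrt{3}x\right)}. \]
   Context: $\mathfrak S_n$ is the set of permutations $\pi=\pi_1\pi_2\cdots\pi_n$ of $[n]=\{1,\dots,n\}$. An index $i$ with $2\le i\le n-1$ is a peak of $\pi$ if $\pi_{i-1}<\pi_i>\pi_{i+1}$ and a valley of $\pi$ if $\pi_{i-1}>\pi_i<\pi_{i+1}$. "All valleys even and all peaks odd" means every valley index is an even integer and every peak index is an odd integer. *)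

theory Defs
  imports "HOL-Combinatorics.Multiset_Permutations" "HOL-Computational_Algebra.Formal_Power_Series"
begin

text \<open>Permutations of [n] are represented as lists p in permutations_of_set {1..n};
  the paper's entry pi_i (1-based) is p ! (i - 1).\<close>

definition is_peak :: "nat list \<Rightarrow> nat \<Rightarrow> bool" where
  "is_peak p i \<longleftrightarrow> 2 \<le> i \<and> i \<le> length p - 1 \<and>
     p ! (i - 2) < p ! (i - 1) \<and> p ! (i - 1) > p ! i"

definition is_valley :: "nat list \<Rightarrow> nat \<Rightarrow> bool" where
  "is_valley p i \<longleftrightarrow> 2 \<le> i \<and> i \<le> length p - 1 \<and>
     p ! (i - 2) > p ! (i - 1) \<and> p ! (i - 1) < p ! i"

definition f_count :: "nat \<Rightarrow> nat" where
  "f_count n = card {p \<in> permutations_of_set {1..n}.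
      (\<forall>i. is_valley p i \<longrightarrow> even i) \<and> (\<forall>i. is_peak p i \<longrightarrow> odd i)}"

definition fps_cosh :: "real \<Rightarrow> real fps" where
  "fps_cosh c = fps_const (1/2) * (fps_exp c + fps_exp (- c))"

definition fps_sinh :: "real \<Rightarrow> real fps" where
  "fps_sinh c = fps_const (1/2) * (fps_exp c - fps_exp (- c))"

end

theory Submission
  imports Defs "HOL-Library.Extended_Nat"
begin

(*
  Proof idea.  Decompose a permutation around its maximal entry and solve the resulting
  convolution recurrences with exponential generating functions.

  A word p of distinct numbers is admissible with
  frame (a,b) and shift s if, after placing an infinite sentinel to the left of p (when a)
  and/or to the right of p (when b), every valley of p sits at a position i with s + i even
  and every peak at a position with s + i odd.  The theorem counts the admissible
  permutations with a = b = False and s = 0.  Cutting p = l1 @ m # l2 at its maximum m gives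
  admissible words with frames (a,True) and (True,b), which yields the recurrence adm_num for
  the counts (card_admissible); they depend only on a, b and the parity q of s.

  Explicit series egf a b q, quotients built from
  cos(x/2), sin(x/2), cosh(sqrt 3 x/2) and sinh(sqrt 3 x/2), satisfy the differential system
  that encodes the recurrence; this reduces to six polynomial identities, and the even and odd
  parts it involves are computed with the reflection x -> -x.  Comparing coefficients gives
  egf a b q = EGF of adm_num a b q (egf_nth), and egf False False False is the closed form.
*)

section \<open>Parity conditions on local extrema of a word\<close>

definition extremum_ok :: "nat \<Rightarrow> 'a::linorder \<Rightarrow> 'a \<Rightarrow> 'a \<Rightarrow> bool" where
  "extremum_ok j l x r \<longleftrightarrow> ((x < l \<and> x < r) \<longrightarrow> even j) \<and> ((l < x \<and> r < x) \<longrightarrow> odd j)"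

fun parity_ok :: "nat \<Rightarrow> 'a::linorder list \<Rightarrow> bool" where
  "parity_ok t (x # y # z # zs) \<longleftrightarrow> extremum_ok (Suc t) x y z \<and> parity_ok (Suc t) (y # z # zs)"
| "parity_ok t _ \<longleftrightarrow> True"

lemma parity_ok_nth:
  "parity_ok t xs \<longleftrightarrow>
     (\<forall>i. 0 < i \<longrightarrow> Suc i < length xs \<longrightarrow> extremum_ok (t + i) (xs ! (i - 1)) (xs ! i) (xs ! Suc i))"
proof (induction t xs rule: parity_ok.induct)
  case (1 t x y z zs)
  let ?ys = "y # z # zs"
  have "(\<forall>i. 0 < i \<longrightarrow> Suc i < length (x # ?ys) \<longrightarrow>
           extremum_ok (t + i) ((x # ?ys) ! (i - 1)) ((x # ?ys) ! i) ((x # ?ys) ! Suc i)) \<longleftrightarrow>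
        extremum_ok (Suc t) x y z \<and>
        (\<forall>i. 0 < i \<longrightarrow> Suc i < length ?ys \<longrightarrow>
           extremum_ok (Suc t + i) (?ys ! (i - 1)) (?ys ! i) (?ys ! Suc i))"
    (is "(\<forall>i. ?P i) \<longleftrightarrow> ?first \<and> (\<forall>i. ?Q i)")
  proof
    assume P: "\<forall>i. ?P i"
    have "?Q i" for i using P[rule_format, of "Suc i"] by (cases i) auto
    with P[rule_format, of 1] show "?first \<and> (\<forall>i. ?Q i)" by simp
  next
    assume Q: "?first \<and> (\<forall>i. ?Q i)"
    show "\<forall>i. ?P i"
    proof
      fix i show "?P i"
        using Q spec[OF Q[THEN conjunct2], of "i - 1"] by (cases i; cases "i - 1") auto
    qed
  qed
  with 1 show ?case by simp
qed simp_all

lemma parity_ok_short: "length xs \<le> 2 \<Longrightarrow> parity_ok t xs"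
  by (induction t xs rule: parity_ok.induct) auto

lemma parity_ok_Cons2:
  "parity_ok t (x # y # zs) \<longleftrightarrow>
     (zs \<noteq> [] \<longrightarrow> extremum_ok (Suc t) x y (hd zs)) \<and> parity_ok (Suc t) (y # zs)"
  by (cases zs) auto

lemma parity_ok_append:
  "parity_ok t (xs @ y # ys) \<longleftrightarrow> parity_ok t (xs @ [y]) \<and> parity_ok (t + length xs) (y # ys) \<and>
     (xs \<noteq> [] \<longrightarrow> ys \<noteq> [] \<longrightarrow> extremum_ok (t + length xs) (last xs) y (hd ys))"
proof (induction xs arbitrary: t)
  case Nil
  then show ?case by simp
next
  case (Cons a as)
  show ?case
  proof (cases as)
    case Nil
    then show ?thesis by (cases ys) (simp_all add: conj_commute)
  next
    case (Cons a' as')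
    have "hd (as' @ y # ys) = hd (as' @ [y])" by (cases as') auto
    then show ?thesis using Cons.IH[of "Suc t"] Cons by (simp add: parity_ok_Cons2)
  qed
qed

lemma parity_ok_snoc_cong:
  assumes "2 \<le> length xs \<Longrightarrow> (last xs < u \<longleftrightarrow> last xs < v) \<and> (u < last xs \<longleftrightarrow> v < last xs)"
  shows "parity_ok t (xs @ [u]) = parity_ok t (xs @ [v])"
proof (cases "2 \<le> length xs")
  case False
  then show ?thesis by (simp add: parity_ok_short)
next
  case True
  define xs0 w where "xs0 = butlast xs" and "w = last xs"
  have xs: "xs = xs0 @ [w]" and ne: "xs0 \<noteq> []"
    using True unfolding xs0_def w_def by (auto simp: le_diff_conv2 simp flip: length_greater_0_conv)
  have "extremum_ok j l w u = extremum_ok j l w v" for j l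
    using assms True xs unfolding extremum_ok_def by auto
  then have "parity_ok t (xs0 @ w # [u]) = parity_ok t (xs0 @ w # [v])"
    using ne by (subst (1 2) parity_ok_append) (simp add: parity_ok_short)
  then show ?thesis by (simp add: xs)
qed

lemma parity_ok_Cons_cong:
  assumes "2 \<le> length ys \<Longrightarrow> (hd ys < u \<longleftrightarrow> hd ys < v) \<and> (u < hd ys \<longleftrightarrow> v < hd ys)"
  shows "parity_ok t (u # ys) = parity_ok t (v # ys)"
proof (cases "2 \<le> length ys")
  case False
  then show ?thesis by (simp add: parity_ok_short)
next
  case True
  then obtain y z zs where ys: "ys = y # z # zs" by (cases ys rule: list.exhaust; cases "tl ys") auto
  have "extremum_ok j u y z = extremum_ok j v y z" for j
    using assms True ys unfolding extremum_ok_def by auto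
  then show ?thesis unfolding ys by simp
qed

section \<open>Admissible words\<close>

definition framed :: "bool \<Rightarrow> bool \<Rightarrow> nat list \<Rightarrow> enat list" where
  "framed a b p = (if a then [\<infinity>] else []) @ map enat p @ (if b then [\<infinity>] else [])"

text \<open>In both cases the entry p!k is checked at position s + k + 1: its valleys lie at
  positions with s + i even, its peaks at positions with s + i odd, where a sentinel neighbour
  counts as larger than every entry.\<close>
definition admissible :: "bool \<Rightarrow> bool \<Rightarrow> nat \<Rightarrow> nat list \<Rightarrow> bool" where
  "admissible a b s p \<longleftrightarrow> parity_ok (if a then s else Suc s) (framed a b p)"

lemma admissible_Nil: "admissible a b s []"
  unfolding admissible_def framed_def by (rule parity_ok_short) simp

lemma admissible_iff_peaks_valleys:
  "admissible False False 0 p \<longleftrightarrow> (\<forall>i. is_valley p i \<longrightarrow> even i) \<and> (\<forall>i. is_peak p i \<longrightarrow> odd i)"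
proof -
  have all_Suc: "(\<forall>i. P i) \<longleftrightarrow> (\<forall>k. P (Suc k))" if "P 0" for P :: "nat \<Rightarrow> bool"
    using that by (metis not0_implies_Suc)
  have "admissible False False 0 p \<longleftrightarrow> (\<forall>k. 0 < k \<longrightarrow> Suc k < length p \<longrightarrow>
      ((p!k < p!(k-1) \<and> p!k < p!Suc k) \<longrightarrow> even (Suc k)) \<and>
      ((p!(k-1) < p!k \<and> p!Suc k < p!k) \<longrightarrow> odd (Suc k)))"
    unfolding admissible_def framed_def parity_ok_nth extremum_ok_def by simp
  also have "\<dots> \<longleftrightarrow> (\<forall>k. (is_valley p (Suc k) \<longrightarrow> even (Suc k)) \<and> (is_peak p (Suc k) \<longrightarrow> odd (Suc k)))"
    unfolding is_valley_def is_peak_def by (auto simp: numeral_2_eq_2)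
  also have "\<dots> \<longleftrightarrow> (\<forall>i. (is_valley p i \<longrightarrow> even i) \<and> (is_peak p i \<longrightarrow> odd i))"
    by (rule all_Suc[symmetric]) (simp add: is_valley_def is_peak_def)
  finally show ?thesis by blast
qed

text \<open>Cutting at the maximum m: the left part must be admissible with a sentinel on its right
  (m plays that role), the right part with a sentinel on its left and the shift moved past m;
  m itself is a peak when both parts are nonempty, and a valley between two sentinels when both
  are empty.\<close>
lemma admissible_split_max:
  assumes l1: "\<forall>x\<in>set l1. x < m" and l2: "\<forall>x\<in>set l2. x < m"
  shows "admissible a b s (l1 @ m # l2) \<longleftrightarrow>
     admissible a True s l1 \<and> admissible True b (Suc (s + length l1)) l2 \<and>
     (l1 \<noteq> [] \<longrightarrow> l2 \<noteq> [] \<longrightarrow> odd (Suc (s + length l1))) \<and>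
     (l1 = [] \<longrightarrow> l2 = [] \<longrightarrow> a \<longrightarrow> b \<longrightarrow> odd s)"
proof -
  define X where "X = (if a then [\<infinity>] else []) @ map enat l1"
  define Y where "Y = map enat l2 @ (if b then [\<infinity>::enat] else [])"
  define t where "t = (if a then s else Suc s)"
  have tX: "t + length X = Suc (s + length l1)" unfolding t_def X_def by auto
  have last_X: "l1 \<noteq> [] \<Longrightarrow> last X = enat (last l1) \<and> last l1 < m"
    unfolding X_def using l1 by (auto simp: last_map)
  have hd_Y: "l2 \<noteq> [] \<Longrightarrow> hd Y = enat (hd l2) \<and> hd l2 < m"
    unfolding Y_def using l2 by (auto simp: hd_map)
  have left: "parity_ok t (X @ [enat m]) = admissible a True s l1"
  proof -
    have "parity_ok t (X @ [enat m]) = parity_ok t (X @ [\<infinity>])"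
    proof (rule parity_ok_snoc_cong)
      assume "2 \<le> length X"
      then have "l1 \<noteq> []" unfolding X_def by (cases a) auto
      with last_X show "(last X < enat m \<longleftrightarrow> last X < \<infinity>) \<and> (enat m < last X \<longleftrightarrow> \<infinity> < last X)"
        by auto
    qed
    then show ?thesis unfolding admissible_def framed_def t_def X_def by simp
  qed
  have right: "parity_ok (Suc (s + length l1)) (enat m # Y) = admissible True b (Suc (s + length l1)) l2"
  proof -
    have "parity_ok (t + length X) (enat m # Y) = parity_ok (t + length X) (\<infinity> # Y)"
    proof (rule parity_ok_Cons_cong)
      assume "2 \<le> length Y"
      then have "l2 \<noteq> []" unfolding Y_def by (cases b) auto
      with hd_Y show "(hd Y < enat m \<longleftrightarrow> hd Y < \<infinity>) \<and> (enat m < hd Y \<longleftrightarrow> \<infinity> < hd Y)"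
        by auto
    qed
    then show ?thesis unfolding admissible_def framed_def tX Y_def by simp
  qed
  have middle: "(X \<noteq> [] \<longrightarrow> Y \<noteq> [] \<longrightarrow> extremum_ok (Suc (s + length l1)) (last X) (enat m) (hd Y))
     \<longleftrightarrow> (l1 \<noteq> [] \<longrightarrow> l2 \<noteq> [] \<longrightarrow> odd (Suc (s + length l1))) \<and>
         (l1 = [] \<longrightarrow> l2 = [] \<longrightarrow> a \<longrightarrow> b \<longrightarrow> odd s)"
    using last_X hd_Y unfolding extremum_ok_def by (cases "l1 = []"; cases "l2 = []") (auto simp: X_def Y_def)
  have "framed a b (l1 @ m # l2) = X @ enat m # Y" unfolding framed_def X_def Y_def by simp
  then have "admissible a b s (l1 @ m # l2) = parity_ok t (X @ enat m # Y)"
    unfolding admissible_def t_def by simp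
  also have "\<dots> \<longleftrightarrow> parity_ok t (X @ [enat m]) \<and> parity_ok (t + length X) (enat m # Y) \<and>
      (X \<noteq> [] \<longrightarrow> Y \<noteq> [] \<longrightarrow> extremum_ok (t + length X) (last X) (enat m) (hd Y))"
    by (rule parity_ok_append)
  finally show ?thesis unfolding left tX right middle .
qed

section \<open>The counting recurrence\<close>

text \<open>Which positions j (= length of the left part) of the maximum are allowed in a word of
  length n + 1; q is the parity of the shift s.\<close>
definition split_ok :: "bool \<Rightarrow> bool \<Rightarrow> bool \<Rightarrow> nat \<Rightarrow> nat \<Rightarrow> bool" where
  "split_ok a b q j n \<longleftrightarrow> (j \<noteq> 0 \<longrightarrow> j \<noteq> n \<longrightarrow> q \<noteq> even j) \<and> (n = 0 \<longrightarrow> a \<longrightarrow> b \<longrightarrow> q)"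

text \<open>The number of admissible arrangements of n + 1 distinct numbers, by position of the
  maximum; the shift of the right part has parity q \<noteq> even j.\<close>
fun adm_num :: "bool \<Rightarrow> bool \<Rightarrow> bool \<Rightarrow> nat \<Rightarrow> nat" where
  "adm_num a b q 0 = 1"
| "adm_num a b q (Suc n) = (\<Sum>j\<le>n. if split_ok a b q j n
      then (n choose j) * adm_num a True q j * adm_num True b (q \<noteq> even j) (n - j) else 0)"

definition split_pairs :: "bool \<Rightarrow> bool \<Rightarrow> nat \<Rightarrow> nat set \<Rightarrow> nat set \<Rightarrow> (nat list \<times> nat list) set" where
  "split_pairs a b s A B = {(l1, l2). l1 \<in> permutations_of_set B \<and> l2 \<in> permutations_of_set (A - B) \<and>
      admissible a True s l1 \<and> admissible True b (Suc (s + card B)) l2 \<and>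
      split_ok a b (odd s) (card B) (card A)}"

lemma admissible_perms_insert_max:
  assumes fin: "finite A" and less_m: "\<forall>x\<in>A. x < m"
  shows "{p \<in> permutations_of_set (insert m A). admissible a b s p} =
    (\<lambda>(l1, l2). l1 @ m # l2) ` (\<Union>B\<in>Pow A. split_pairs a b s A B)"
proof (intro equalityI subsetI)
  fix p assume "p \<in> {p \<in> permutations_of_set (insert m A). admissible a b s p}"
  then have p: "set p = insert m A" "distinct p" "admissible a b s p"
    by (auto simp: permutations_of_set_def)
  then obtain l1 l2 where pl: "p = l1 @ m # l2" by (metis insertI1 split_list)
  have m_notin: "m \<notin> A" using less_m by blast
  have parts: "distinct l1" "distinct l2" "set l1 \<subseteq> A" "set l2 = A - set l1"
    using p pl m_notin by auto
  have "\<forall>x\<in>set l1. x < m" "\<forall>x\<in>set l2. x < m" using parts less_m by auto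
  note split = admissible_split_max[OF this, of a b s]
  have card_l1: "card (set l1) = length l1" using parts by (simp add: distinct_card)
  have "length p = card (insert m A)" using p by (metis distinct_card)
  then have len: "length l1 + length l2 = card A" using pl fin m_notin by simp
  have "split_ok a b (odd s) (length l1) (card A)"
    using p(3) len unfolding pl split split_ok_def by auto
  then have "(l1, l2) \<in> split_pairs a b s A (set l1)"
    using parts p(3) unfolding split_pairs_def pl split card_l1
    by (auto simp: permutations_of_set_def)
  then show "p \<in> (\<lambda>(l1, l2). l1 @ m # l2) ` (\<Union>B\<in>Pow A. split_pairs a b s A B)"
    using parts unfolding pl by force
next
  fix p assume "p \<in> (\<lambda>(l1, l2). l1 @ m # l2) ` (\<Union>B\<in>Pow A. split_pairs a b s A B)"
  then obtain B l1 l2 where B: "B \<subseteq> A" and pair: "(l1, l2) \<in> split_pairs a b s A B"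
    and pl: "p = l1 @ m # l2" by auto
  have l: "set l1 = B" "distinct l1" "set l2 = A - B" "distinct l2"
    "admissible a True s l1" "admissible True b (Suc (s + card B)) l2"
    "split_ok a b (odd s) (card B) (card A)"
    using pair unfolding split_pairs_def by (auto simp: permutations_of_set_def)
  have card_B: "card B = length l1" using l by (metis distinct_card)
  have "\<forall>x\<in>set l1. x < m" "\<forall>x\<in>set l2. x < m" using l B less_m by auto
  note split = admissible_split_max[OF this, of a b s]
  have "card (A - B) = card A - card B" "card B \<le> card A"
    using B fin by (simp_all add: card_Diff_subset finite_subset card_mono)
  then have len: "length l1 + length l2 = card A" using l card_B by (metis distinct_card le_add_diff_inverse)
  have "set p = insert m A" "distinct p" using l B less_m unfolding pl by auto
  moreover have "admissible a b s p" unfolding pl split using l card_B len unfolding split_ok_def by auto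
  ultimately show "p \<in> {p \<in> permutations_of_set (insert m A). admissible a b s p}"
    by (auto simp: permutations_of_set_def)
qed

text \<open>The gluing is injective because m occurs in neither part.\<close>
lemma inj_on_glue_max:
  assumes "\<forall>x\<in>A. x < m"
  shows "inj_on (\<lambda>(l1, l2). l1 @ m # l2) (\<Union>B\<in>Pow A. split_pairs a b s A B)"
proof (rule inj_onI)
  fix x y assume x: "x \<in> (\<Union>B\<in>Pow A. split_pairs a b s A B)"
    and y: "y \<in> (\<Union>B\<in>Pow A. split_pairs a b s A B)"
    and eq: "(\<lambda>(l1, l2). l1 @ m # l2) x = (\<lambda>(l1, l2). l1 @ m # l2) y"
  obtain x1 x2 y1 y2 where xy: "x = (x1, x2)" "y = (y1, y2)" by fastforce
  have "m \<notin> set x1" "m \<notin> set x2" "m \<notin> set y1" "m \<notin> set y2"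
    using x y assms unfolding xy split_pairs_def by (auto simp: permutations_of_set_def)
  then show "x = y" using eq unfolding xy by (simp add: append_Cons_eq_iff)
qed

lemma split_pairs_eq:
  "split_pairs a b s A B = (if split_ok a b (odd s) (card B) (card A)
      then {l1 \<in> permutations_of_set B. admissible a True s l1} \<times>
           {l2 \<in> permutations_of_set (A - B). admissible True b (Suc (s + card B)) l2}
      else {})"
  unfolding split_pairs_def by auto

lemma sum_Pow_card:
  assumes "finite S"
  shows "(\<Sum>B\<in>Pow S. g (card B)) = (\<Sum>j\<le>card S. (card S choose j) * (g j :: nat))"
proof -
  have "(\<Sum>B\<in>Pow S. g (card B)) = (\<Sum>j\<le>card S. \<Sum>B\<in>{B\<in>Pow S. card B = j}. g (card B))"
    using assms by (intro sum.group[symmetric]) (auto intro: card_mono)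
  also have "\<dots> = (\<Sum>j\<le>card S. (card S choose j) * g j)"
  proof (intro sum.cong refl)
    fix j
    have "{B\<in>Pow S. card B = j} = {B. B \<subseteq> S \<and> card B = j}" by auto
    then show "(\<Sum>B\<in>{B\<in>Pow S. card B = j}. g (card B)) = (card S choose j) * g j"
      using n_subsets[OF assms, of j] by simp
  qed
  finally show ?thesis .
qed

theorem card_admissible:
  "finite A \<Longrightarrow> card {p \<in> permutations_of_set A. admissible a b s p} = adm_num a b (odd s) (card A)"
proof (induction "card A" arbitrary: A a b s rule: less_induct)
  case less
  show ?case
  proof (cases "A = {}")
    case True
    then have "{p \<in> permutations_of_set A. admissible a b s p} = {[]}" using admissible_Nil by auto
    then show ?thesis using True by simp
  next
    case False
    define m where "m = Max A"
    define A' where "A' = A - {m}"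
    have m: "m \<in> A" using False less.prems unfolding m_def by simp
    then have A: "A = insert m A'" and fin: "finite A'" using less.prems unfolding A'_def by auto
    have card_A: "card A = Suc (card A')" unfolding A'_def by (rule card_Suc_Diff1[OF less.prems m, symmetric])
    have less_m: "\<forall>x\<in>A'. x < m"
      using less.prems unfolding A'_def m_def by (metis DiffE Max_ge insertI1 order_le_neq_trans)
    let ?glue = "\<lambda>(l1, l2). l1 @ m # l2"
    let ?term = "\<lambda>j. if split_ok a b (odd s) j (card A')
      then adm_num a True (odd s) j * adm_num True b (odd s \<noteq> even j) (card A' - j) else 0"
    have card_pairs: "card (split_pairs a b s A' B) = ?term (card B)" if "B \<subseteq> A'" for B
    proof -
      have "card B < card A" "card (A' - B) < card A" "card (A' - B) = card A' - card B"
        using that fin card_A by (auto simp: card_mono le_imp_less_Suc card_Diff_subset finite_subset)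
      moreover have "odd (Suc (s + card B)) = (odd s \<noteq> even (card B))" by auto
      ultimately show ?thesis
        unfolding split_pairs_eq using less.hyps that fin
        by (simp add: card_cartesian_product finite_subset)
    qed
    have disjoint: "\<forall>B\<in>Pow A'. \<forall>B'\<in>Pow A'. B \<noteq> B' \<longrightarrow> split_pairs a b s A' B \<inter> split_pairs a b s A' B' = {}"
      unfolding split_pairs_def by (auto simp: permutations_of_set_def)
    have "card {p \<in> permutations_of_set A. admissible a b s p} =
        card (?glue ` (\<Union>B\<in>Pow A'. split_pairs a b s A' B))"
      unfolding A admissible_perms_insert_max[OF fin less_m] ..
    also have "\<dots> = card (\<Union>B\<in>Pow A'. split_pairs a b s A' B)"
      by (rule card_image[OF inj_on_glue_max[OF less_m]])
    also have "\<dots> = (\<Sum>B\<in>Pow A'. card (split_pairs a b s A' B))"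
      using fin disjoint by (intro card_UN_disjoint) (auto simp: split_pairs_eq)
    also have "\<dots> = (\<Sum>B\<in>Pow A'. ?term (card B))" using card_pairs by (intro sum.cong) auto
    also have "\<dots> = (\<Sum>j\<le>card A'. (card A' choose j) * ?term j)" by (rule sum_Pow_card[OF fin])
    also have "\<dots> = adm_num a b (odd s) (card A)"
      unfolding card_A by (simp add: mult.assoc cong: if_cong) (intro sum.cong refl, simp)
    finally show ?thesis .
  qed
qed

corollary f_count_eq_adm_num: "f_count n = adm_num False False False n"
proof -
  have "f_count n = card {p \<in> permutations_of_set {1..n}. admissible False False 0 p}"
    unfolding f_count_def admissible_iff_peaks_valleys ..
  also have "\<dots> = adm_num False False False n" using card_admissible[of "{1..n}"] by simp
  finally show ?thesis .
qed

section \<open>Reflection, even and odd parts of power series\<close>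

definition reflect :: "'a::comm_ring_1 fps \<Rightarrow> 'a fps" where
  "reflect X = X oo - fps_X"

lemma reflect_nth: "fps_nth (reflect X) n = (-1) ^ n * fps_nth X n"
  unfolding reflect_def fps_compose_uminus' by simp

lemma reflect_simps [simp]:
  fixes X Y :: "'a::field fps"
  shows "reflect (X + Y) = reflect X + reflect Y" "reflect (X - Y) = reflect X - reflect Y"
    "reflect (- X) = - reflect X" "reflect (X * Y) = reflect X * reflect Y"
    "reflect (X ^ k) = reflect X ^ k" "reflect (fps_const c) = fps_const c"
    "reflect (numeral w) = numeral w" "reflect 1 = 1"
  unfolding reflect_def
  by (simp_all add: fps_compose_add_distrib fps_compose_sub_distrib fps_compose_uminus
      fps_compose_mult_distrib fps_compose_power)

lemma reflect_inverse:
  fixes X :: "'a::field fps"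
  shows "fps_nth X 0 \<noteq> 0 \<Longrightarrow> reflect (inverse X) = inverse (reflect X)"
  unfolding reflect_def by (simp add: fps_inverse_compose)

definition even_part :: "'a::comm_ring_1 fps \<Rightarrow> 'a fps" where
  "even_part X = Abs_fps (\<lambda>n. if even n then fps_nth X n else 0)"

definition odd_part :: "'a::comm_ring_1 fps \<Rightarrow> 'a fps" where
  "odd_part X = Abs_fps (\<lambda>n. if even n then 0 else fps_nth X n)"

lemma even_part_reflect:
  fixes X :: "'a::field_char_0 fps"
  shows "even_part X = fps_const (1/2) * (X + reflect X)"
  by (rule fps_ext) (simp add: even_part_def reflect_nth)

lemma odd_part_reflect:
  fixes X :: "'a::field_char_0 fps"
  shows "odd_part X = fps_const (1/2) * (X - reflect X)"
  by (rule fps_ext) (simp add: odd_part_def reflect_nth)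

lemma even_odd_part_mult:
  fixes Ev Od W :: "'a::field_char_0 fps"
  assumes "reflect Ev = Ev" "reflect Od = - Od" "reflect W = W"
  shows "even_part ((Ev + Od) * W) = Ev * W" "odd_part ((Ev + Od) * W) = Od * W"
proof -
  have half: "fps_const (1/2) * (Z + Z) = Z" for Z :: "'a fps"
    by (simp flip: mult_2 add: mult.assoc[symmetric] numeral_fps_const fps_const_mult[symmetric])
  show "even_part ((Ev + Od) * W) = Ev * W" "odd_part ((Ev + Od) * W) = Od * W"
    unfolding even_part_reflect odd_part_reflect using assms half[of "Ev * W"] half[of "Od * W"]
    by (simp_all add: algebra_simps)
qed

section \<open>The trigonometric and hyperbolic building blocks\<close>

lemma fps_cosh_deriv: "fps_deriv (fps_cosh c) = fps_const c * fps_sinh c"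
  unfolding fps_cosh_def fps_sinh_def by (simp add: algebra_simps flip: fps_const_neg)

lemma fps_sinh_deriv: "fps_deriv (fps_sinh c) = fps_const c * fps_cosh c"
  unfolding fps_cosh_def fps_sinh_def by (simp add: algebra_simps flip: fps_const_neg)

lemma fps_cosh_sinh_squares: "fps_cosh c ^ 2 - fps_sinh c ^ 2 = 1"
proof -
  have exp_inv: "fps_exp c * fps_exp (- c) = 1" by (simp flip: fps_exp_add_mult)
  have "fps_cosh c ^ 2 - fps_sinh c ^ 2 = fps_const (1/2) * fps_const (1/2) * (4 * (fps_exp c * fps_exp (- c)))"
    unfolding fps_cosh_def fps_sinh_def by (simp add: algebra_simps power2_eq_square)
  then show ?thesis unfolding exp_inv by (simp add: numeral_fps_const)
qed

lemma reflect_fps_cos: "reflect (fps_cos c) = fps_cos c"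
  by (rule fps_ext) (simp add: reflect_nth fps_cos_def)

lemma reflect_fps_sin: "reflect (fps_sin c) = - fps_sin c"
  by (rule fps_ext) (simp add: reflect_nth fps_sin_def)

lemma reflect_fps_cosh: "reflect (fps_cosh c) = fps_cosh c"
  unfolding fps_cosh_def reflect_def by (simp add: fps_compose_add_distrib fps_compose_mult_distrib algebra_simps)

lemma reflect_fps_sinh: "reflect (fps_sinh c) = - fps_sinh c"
  unfolding fps_sinh_def reflect_def by (simp add: fps_compose_sub_distrib fps_compose_mult_distrib algebra_simps)

text \<open>The four series cos(x/2), sin(x/2), cosh(sqrt 3 x/2) and sinh(sqrt 3 x/2)/sqrt 3.  Their
  derivatives, up to the factor 2, stay in this family with integer coefficients, which makes
  all identities below polynomial.\<close>
definition "cosH = fps_cos (1/2 :: real)"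
definition "sinH = fps_sin (1/2 :: real)"
definition "coshH = fps_cosh (sqrt 3 / 2)"
definition "sinhH = fps_const (1 / sqrt 3) * fps_sinh (sqrt 3 / 2)"

lemma deriv_cosH: "2 * fps_deriv cosH = - sinH"
  unfolding cosH_def sinH_def fps_cos_deriv
  by (simp add: numeral_fps_const flip: mult.assoc fps_const_neg)

lemma deriv_sinH: "2 * fps_deriv sinH = cosH"
  unfolding cosH_def sinH_def fps_sin_deriv by (simp add: numeral_fps_const)

lemma sinh_sinhH: "fps_const (sqrt 3) * fps_sinh (sqrt 3 / 2) = 3 * sinhH"
  unfolding sinhH_def by (simp add: numeral_fps_const real_div_sqrt flip: mult.assoc)

lemma deriv_coshH: "2 * fps_deriv coshH = 3 * sinhH"
proof -
  have "2 * fps_deriv coshH = fps_const (sqrt 3) * fps_sinh (sqrt 3 / 2)"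
    unfolding coshH_def fps_cosh_deriv by (simp add: numeral_fps_const)
  then show ?thesis unfolding sinh_sinhH .
qed

lemma deriv_sinhH: "2 * fps_deriv sinhH = coshH"
  by (simp add: sinhH_def coshH_def fps_sinh_deriv numeral_fps_const flip: mult.assoc)

lemma cosH_sinH_squares: "cosH ^ 2 + sinH ^ 2 = 1"
  unfolding cosH_def sinH_def by (rule fps_sin_cos_sum_of_squares)

lemma coshH_sinhH_squares: "coshH ^ 2 - 3 * sinhH ^ 2 = 1"
proof -
  have "3 * sinhH ^ 2 = fps_sinh (sqrt 3 / 2) ^ 2"
    unfolding sinhH_def by (simp add: power_mult_distrib numeral_fps_const power_divide)
  then show ?thesis unfolding coshH_def using fps_cosh_sinh_squares by simp
qed

lemma constant_terms: "fps_nth cosH 0 = 1" "fps_nth sinH 0 = 0" "fps_nth coshH 0 = 1" "fps_nth sinhH 0 = 0"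
  by (simp_all add: cosH_def sinH_def coshH_def sinhH_def fps_cosh_def fps_sinh_def)

lemma reflect_building_blocks [simp]:
  "reflect cosH = cosH" "reflect sinH = - sinH" "reflect coshH = coshH" "reflect sinhH = - sinhH"
  by (simp_all add: cosH_def sinH_def coshH_def sinhH_def
      reflect_fps_cos reflect_fps_sin reflect_fps_cosh reflect_fps_sinh)

text \<open>The common denominator of all the generating functions: (cos - sinh/sqrt 3)(cos + sinh/sqrt 3).\<close>
definition "den = cosH ^ 2 - sinhH ^ 2"
definition "den_inv = inverse den"

lemma den_nth_0: "fps_nth den 0 = 1"
  unfolding den_def by (simp add: power2_eq_square constant_terms)

lemma den_inv_nth_0: "fps_nth den_inv 0 = 1"
  unfolding den_inv_def using den_nth_0 by simp

lemma den_inv_mult: "den_inv * den = 1"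
  unfolding den_inv_def using den_nth_0 by (simp add: inverse_mult_eq_1)

lemma reflect_den_inv [simp]: "reflect den_inv = den_inv"
  unfolding den_inv_def using den_nth_0 by (simp add: reflect_inverse den_def)

lemma deriv_over_den:
  "fps_deriv (N * den_inv) =
     fps_deriv N * den_inv - N * (2 * cosH * fps_deriv cosH - 2 * sinhH * fps_deriv sinhH) * den_inv ^ 2"
proof -
  have "fps_deriv den = 2 * cosH * fps_deriv cosH - 2 * sinhH * fps_deriv sinhH"
    unfolding den_def by (simp add: fps_deriv_power algebra_simps numeral_fps_const)
  then have d: "fps_deriv den_inv = - (2 * cosH * fps_deriv cosH - 2 * sinhH * fps_deriv sinhH) * den_inv ^ 2"
    unfolding den_inv_def using den_nth_0 by (simp add: fps_inverse_deriv)
  show ?thesis unfolding fps_deriv_mult d by (simp add: algebra_simps)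
qed

section \<open>The candidate generating functions and their differential system\<close>

definition "num_F = (sinH + coshH) * (cosH + sinhH)"
definition "num_C = (cosH + sinhH) ^ 2"
definition "ev0 = cosH * coshH + sinH * sinhH"
definition "od0 = 2 * cosH * sinhH"
definition "ev1 = cosH ^ 2 + sinhH ^ 2"
definition "od1 = sinH * cosH + coshH * sinhH"
definition "od2 = coshH * sinhH - cosH * sinH"

text \<open>egf a b q will turn out to be the exponential generating function of adm_num a b q.\<close>
definition egf :: "bool \<Rightarrow> bool \<Rightarrow> bool \<Rightarrow> real fps" where
  "egf a b q = (if a \<and> b then (if q then ev1 + od1 else ev1 + od2)
     else if a then (if q then num_F else num_C)
     else if b then (if q then ev1 + od1 else ev0 + od0)
     else num_F) * den_inv"

lemma egf_nth_0: "fps_nth (egf a b q) 0 = 1"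
  by (simp add: egf_def den_inv_nth_0 num_F_def num_C_def ev0_def od0_def ev1_def od1_def od2_def
      constant_terms power2_eq_square)

lemma reflect_numerators [simp]:
  "reflect ev0 = ev0" "reflect ev1 = ev1" "reflect od0 = - od0" "reflect od1 = - od1" "reflect od2 = - od2"
  by (simp_all add: ev0_def od0_def ev1_def od1_def od2_def algebra_simps)

lemma ode_identities_even_shift:
  "fps_deriv (num_F * den_inv) = ev0 * den_inv * (num_F * den_inv) + od0 * den_inv"
  "fps_deriv ((ev0 + od0) * den_inv) = ev0 * den_inv * ((ev1 + od1) * den_inv) + od0 * den_inv"
  "fps_deriv (num_C * den_inv) = ev1 * den_inv * (num_F * den_inv) + od2 * den_inv"
  "fps_deriv ((ev1 + od2) * den_inv) = ev1 * den_inv * ((ev1 + od1) * den_inv) + od2 * den_inv - 1"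
  using deriv_cosH deriv_sinH deriv_coshH deriv_sinhH cosH_sinH_squares coshH_sinhH_squares
    den_inv_mult[unfolded den_def]
  unfolding deriv_over_den num_F_def num_C_def ev0_def od0_def ev1_def od1_def od2_def
  by (simp_all add: algebra_simps power2_eq_square) algebra+

lemma ode_identities_odd_shift:
  "fps_deriv (num_F * den_inv) = od1 * den_inv * (num_F * den_inv) + num_C * den_inv + ev1 * den_inv - 1"
  "fps_deriv ((ev1 + od1) * den_inv) =
     od1 * den_inv * ((ev1 + od1) * den_inv) + (ev1 + od2) * den_inv + ev1 * den_inv - 1"
  using deriv_cosH deriv_sinH deriv_coshH deriv_sinhH cosH_sinH_squares coshH_sinhH_squares
    den_inv_mult[unfolded den_def]
  unfolding deriv_over_den num_F_def num_C_def ev0_def od0_def ev1_def od1_def od2_def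
  by (simp_all add: algebra_simps power2_eq_square) algebra+

text \<open>The differential system, mirroring the recurrence of adm_num: differentiation removes the
  maximum, the left part is split by the parity of its length, the right part keeps the frame b.
  The constant correction for a = b with even shift reflects that the single-entry word between
  two sentinels is then a valley at an odd position.\<close>
lemma egf_deriv_False:
  "fps_deriv (egf a b False) = even_part (egf a True False) * egf True b True
     + odd_part (egf a True False) - (if a \<and> b then 1 else 0)"
  by (cases a; cases b) (simp_all add: egf_def even_odd_part_mult ode_identities_even_shift del: fps_deriv_mult)

lemma egf_deriv_True:
  "fps_deriv (egf a b True) = odd_part (egf a True True) * egf True b True + egf True b False
     + even_part (egf a True True) - 1"
  by (cases a; cases b) (simp_all add: egf_def even_odd_part_mult ode_identities_odd_shift del: fps_deriv_mult)

section \<open>Coefficients of the differential system\<close>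

lemma nth_even_part_convolution:
  fixes A :: "'a::comm_ring_1 fps" and B :: "bool \<Rightarrow> 'a fps"
  assumes B0: "fps_nth (B False) 0 = 1"
  shows "fps_nth (even_part A * B True + odd_part A) n =
    (\<Sum>j\<le>n. if j \<noteq> 0 \<longrightarrow> j \<noteq> n \<longrightarrow> even j then fps_nth A j * fps_nth (B (even j)) (n - j) else 0)"
proof -
  have "fps_nth (even_part A * B True + odd_part A) n =
      (\<Sum>j<n. (if even j then fps_nth A j else 0) * fps_nth (B True) (n - j)) +
      (if even n then fps_nth A n * fps_nth (B True) 0 else 0) + (if even n then 0 else fps_nth A n)"
    by (simp add: fps_mult_nth even_part_def odd_part_def atLeast0AtMost
        flip: lessThan_Suc_atMost)
  also have "\<dots> = (\<Sum>j<n. if j \<noteq> 0 \<longrightarrow> j \<noteq> n \<longrightarrow> even j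
      then fps_nth A j * fps_nth (B (even j)) (n - j) else 0) + fps_nth A n * fps_nth (B (even n)) 0"
    using B0 by (auto intro: sum.cong)
  finally show ?thesis by (simp flip: lessThan_Suc_atMost)
qed

lemma nth_odd_part_convolution:
  fixes A :: "'a::comm_ring_1 fps" and B :: "bool \<Rightarrow> 'a fps"
  assumes B0: "fps_nth (B False) 0 = 1" and A0: "fps_nth A 0 = 1"
  shows "fps_nth (odd_part A * B True + B False + even_part A - 1) n =
    (\<Sum>j\<le>n. if j \<noteq> 0 \<longrightarrow> j \<noteq> n \<longrightarrow> odd j then fps_nth A j * fps_nth (B (odd j)) (n - j) else 0)"
proof (cases "n = 0")
  case True
  then show ?thesis using A0 B0 by (simp add: even_part_def odd_part_def)
next
  case False
  let ?S = "\<Sum>j<n. (if even j then 0 else fps_nth A j) * fps_nth (B True) (n - j)"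
  have lhs: "fps_nth (odd_part A * B True + B False + even_part A - 1) n =
      ?S + (if even n then 0 else fps_nth A n * fps_nth (B True) 0) + fps_nth (B False) n +
      (if even n then fps_nth A n else 0)"
    using False by (simp add: fps_mult_nth even_part_def odd_part_def atLeast0AtMost
        flip: lessThan_Suc_atMost)
  have "(\<Sum>j<n. if j \<noteq> 0 \<longrightarrow> j \<noteq> n \<longrightarrow> odd j then fps_nth A j * fps_nth (B (odd j)) (n - j) else 0) =
      (\<Sum>j<n. (if even j then 0 else fps_nth A j) * fps_nth (B True) (n - j) +
         (if j = 0 then fps_nth (B False) n else 0))"
    using A0 by (intro sum.cong) auto
  also have "\<dots> = ?S + fps_nth (B False) n"
    using False by (simp add: sum.distrib)
  finally show ?thesis unfolding lhs using B0 by (auto simp flip: lessThan_Suc_atMost)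
qed

lemma egf_deriv_nth:
  "fps_nth (fps_deriv (egf a b q)) n = (\<Sum>j\<le>n. if split_ok a b q j n
     then fps_nth (egf a True q) j * fps_nth (egf True b (q \<noteq> even j)) (n - j) else 0)"
proof -
  have bool_neq: "(True \<noteq> P) = (\<not> P)" "(False \<noteq> P) = P" for P by simp_all
  show ?thesis
  proof (induct q)
    case True
    have "fps_nth (fps_deriv (egf a b True)) n = (\<Sum>j\<le>n. if j \<noteq> 0 \<longrightarrow> j \<noteq> n \<longrightarrow> odd j
        then fps_nth (egf a True True) j * fps_nth (egf True b (odd j)) (n - j) else 0)"
      unfolding egf_deriv_True by (rule nth_odd_part_convolution) (simp_all add: egf_nth_0)
    then show ?case unfolding split_ok_def bool_neq by simp
  next
    case False
    have conv: "fps_nth (even_part (egf a True False) * egf True b True + odd_part (egf a True False)) n =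
      (\<Sum>j\<le>n. if j \<noteq> 0 \<longrightarrow> j \<noteq> n \<longrightarrow> even j
        then fps_nth (egf a True False) j * fps_nth (egf True b (even j)) (n - j) else 0)"
      by (rule nth_even_part_convolution) (simp add: egf_nth_0)
    show ?case
    proof (cases "a \<and> b \<and> n = 0")
      case True
      then show ?thesis using conv unfolding egf_deriv_False by (simp add: split_ok_def egf_nth_0)
    next
      case nondegenerate: False
      then have "split_ok a b False j n = (j \<noteq> 0 \<longrightarrow> j \<noteq> n \<longrightarrow> even j)" for j
        unfolding split_ok_def by auto
      moreover have "fps_nth (fps_deriv (egf a b False)) n =
        fps_nth (even_part (egf a True False) * egf True b True + odd_part (egf a True False)) n"
        unfolding egf_deriv_False using nondegenerate by auto
      ultimately show ?thesis using conv unfolding bool_neq by simp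
    qed
  qed
qed

lemma adm_num_recurrence_normalised:
  "real (adm_num a b q (Suc n)) / fact (Suc n) * real (Suc n) =
   (\<Sum>j\<le>n. if split_ok a b q j n then (real (adm_num a True q j) / fact j) *
        (real (adm_num True b (q \<noteq> even j) (n - j)) / fact (n - j)) else 0)"
proof -
  have "real (adm_num a b q (Suc n)) / fact (Suc n) * real (Suc n) = real (adm_num a b q (Suc n)) / fact n"
    by (simp add: fact_Suc)
  also have "\<dots> = (\<Sum>j\<le>n. (if split_ok a b q j n then real (n choose j) * real (adm_num a True q j) *
        real (adm_num True b (q \<noteq> even j) (n - j)) else 0) / fact n)"
    by (simp add: sum_divide_distrib of_nat_sum if_distrib cong: if_cong)
  also have "\<dots> = (\<Sum>j\<le>n. if split_ok a b q j n then (real (adm_num a True q j) / fact j) *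
        (real (adm_num True b (q \<noteq> even j) (n - j)) / fact (n - j)) else 0)"
    by (intro sum.cong refl) (simp add: binomial_fact)
  finally show ?thesis .
qed

text \<open>Both sides satisfy the same recurrence with the same initial value, so egf a b q is the
  exponential generating function of adm_num a b q.\<close>
theorem egf_nth: "fps_nth (egf a b q) n = real (adm_num a b q n) / fact n"
proof (induction n arbitrary: a b q rule: less_induct)
  case (less n)
  show ?case
  proof (cases n)
    case 0
    then show ?thesis by (simp add: egf_nth_0)
  next
    case (Suc m)
    have "fps_nth (egf a b q) (Suc m) * real (Suc m) = fps_nth (fps_deriv (egf a b q)) m"
      by (simp add: fps_deriv_nth)
    also have "\<dots> = (\<Sum>j\<le>m. if split_ok a b q j m then (real (adm_num a True q j) / fact j) *
        (real (adm_num True b (q \<noteq> even j) (m - j)) / fact (m - j)) else 0)"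
      unfolding egf_deriv_nth using Suc by (intro sum.cong refl) (simp add: less.IH)
    also have "\<dots> = real (adm_num a b q (Suc m)) / fact (Suc m) * real (Suc m)"
      by (rule adm_num_recurrence_normalised[symmetric])
    finally have "fps_nth (egf a b q) (Suc m) * real (Suc m) =
        real (adm_num a b q (Suc m)) / fact (Suc m) * real (Suc m)" .
    moreover have "real (Suc m) \<noteq> 0" by simp
    ultimately show ?thesis using Suc mult_right_cancel by metis
  qed
qed

text \<open>The closed form of the theorem is egf False False False after cancelling the factor
  cos(x/2) + sinh(sqrt 3 x/2)/sqrt 3.\<close>
lemma closed_form_eq_egf:
  "(fps_const 3 * fps_sin (1/2) + fps_const 3 * fps_cosh (sqrt 3 / 2)) /
    (fps_const 3 * fps_cos (1/2) - fps_const (sqrt 3) * fps_sinh (sqrt 3 / 2)) = egf False False False"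
proof -
  have num: "fps_const 3 * fps_sin (1/2) + fps_const 3 * fps_cosh (sqrt 3 / 2) = 3 * sinH + 3 * coshH"
    by (simp add: sinH_def coshH_def numeral_fps_const)
  have denom: "fps_const 3 * fps_cos (1/2) - fps_const (sqrt 3) * fps_sinh (sqrt 3 / 2) = 3 * cosH - 3 * sinhH"
    by (simp add: cosH_def sinh_sinhH numeral_fps_const)
  have third: "fps_const (1/3) * 3 = (1 :: real fps)" by (simp add: numeral_fps_const)
  have inv: "inverse (3 * cosH - 3 * sinhH) = fps_const (1/3) * (cosH + sinhH) * den_inv"
    by (rule fps_inverse_unique) (use third den_inv_mult in \<open>unfold den_def, algebra\<close>)
  have egf: "egf False False False = (sinH + coshH) * (cosH + sinhH) * den_inv"
    by (simp add: egf_def num_F_def)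
  have unit: "fps_nth (3 * cosH - 3 * sinhH) 0 \<noteq> 0" by (simp add: constant_terms)
  show ?thesis unfolding num denom fps_divide_unit[OF unit] inv egf using third by algebra
qed

theorem theorem1:
  shows "Abs_fps (\<lambda>n. real (f_count n) / fact n) =
    (fps_const 3 * fps_sin (1/2) + fps_const 3 * fps_cosh (sqrt 3 / 2)) /
    (fps_const 3 * fps_cos (1/2) - fps_const (sqrt 3) * fps_sinh (sqrt 3 / 2))"
  unfolding closed_form_eq_egf by (rule fps_ext) (simp add: egf_nth f_count_eq_adm_num)

end
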